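(* Let $N\ge1$, $\lambda_0,\dots,\lambda_N>0$ and $\gamma_0,\dots,\gamma_N\in\mathbb{C}$ distinct, and let $$\mathcal{R}(z)=\frac{\sum_{i=0}^N\sum_{j=i+1}^N\lambda_i^2\lambda_j^2(\gamma_i-\gamma_j)^2\prod_{k\neq i,j}(z-\gamma_k)}{\Big(\sum_{i=0}^N\lambda_i^2\Big)\Big(\sum_{j=0}^N\lambda_j^2\prod_{k\neq j}(z-\gamma_k)\Big)}$$ be the rational map of the JNR monopole with this data. Let $q(z)=\big(\frac{\lambda_0}{z-\gamma_0},\dots,\frac{\lambda_N}{z-\gamma_N}\big)$ and $q(\infty)=(\lambda_0,\dots,\lambda_N)$. Then there exists a unique $a=(a_0,\dots,a_N)\in\mathbb{C}^{N+1}$ such that $$\mathcal{R}(z)=\frac{\frac{a_0\lambda_0}{z-\gamma_0}+\cdots+\frac{a_N\lambda_N}{z-\gamma_N}}{\frac{\lambda_0^2}{z-\gamma_0}+\cdots+\frac{\lambda_N^2}{z-\gamma_N}}=\frac{\langle\bar a,q(z)\rangle}{\langle q(\infty),q(z)\rangle}.$$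
   Context: $\langle\cdot,\cdot\rangle$ is the standard Hermitian inner product on $\mathbb{C}^{N+1}$, conjugate-linear in the first factor, and $\bar a$ denotes the componentwise complex conjugate of $a$. *)

theory Defs
  imports Complex_Main "HOL-Library.FuncSet"
begin

definition jnr_R :: "nat \<Rightarrow> (nat \<Rightarrow> real) \<Rightarrow> (nat \<Rightarrow> complex) \<Rightarrow> complex \<Rightarrow> complex" where
  "jnr_R N lam gam z =
     (\<Sum>i=0..N. \<Sum>j=i+1..N. complex_of_real ((lam i)\<^sup>2 * (lam j)\<^sup>2) * (gam i - gam j)\<^sup>2
                 * (\<Prod>k\<in>{0..N} - {i, j}. z - gam k))
     / (complex_of_real (\<Sum>i=0..N. (lam i)\<^sup>2)
        * (\<Sum>j=0..N. complex_of_real ((lam j)\<^sup>2) * (\<Prod>k\<in>{0..N} - {j}. z - gam k)))"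

definition hinner :: "nat \<Rightarrow> (nat \<Rightarrow> complex) \<Rightarrow> (nat \<Rightarrow> complex) \<Rightarrow> complex" where
  "hinner N u v = (\<Sum>i=0..N. cnj (u i) * v i)"

definition jnr_q :: "(nat \<Rightarrow> real) \<Rightarrow> (nat \<Rightarrow> complex) \<Rightarrow> complex \<Rightarrow> nat \<Rightarrow> complex" where
  "jnr_q lam gam z i = complex_of_real (lam i) / (z - gam i)"

definition jnr_q_inf :: "(nat \<Rightarrow> real) \<Rightarrow> nat \<Rightarrow> complex" where
  "jnr_q_inf lam i = complex_of_real (lam i)"

end

theory Submission
  imports Defs "HOL-Computational_Algebra.Polynomial"
begin

text \<open>
  Multiplying numerator and denominator of \<open>\<R>\<close> by \<open>1 / \<Prod>\<^sub>k (z - \<gamma>\<^sub>k)\<close> turns the denominator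
  into \<open>(\<Sum> \<lambda>\<^sub>i\<^sup>2) \<Sum> \<lambda>\<^sub>j\<^sup>2 / (z - \<gamma>\<^sub>j)\<close> and each pair term of the numerator into
  \<open>\<lambda>\<^sub>i\<^sup>2 \<lambda>\<^sub>j\<^sup>2 (\<gamma>\<^sub>i - \<gamma>\<^sub>j)\<^sup>2 / ((z - \<gamma>\<^sub>i)(z - \<gamma>\<^sub>j))
    = \<lambda>\<^sub>i\<^sup>2 \<lambda>\<^sub>j\<^sup>2 ((\<gamma>\<^sub>i - \<gamma>\<^sub>j) / (z - \<gamma>\<^sub>i) + (\<gamma>\<^sub>j - \<gamma>\<^sub>i) / (z - \<gamma>\<^sub>j))\<close>.
  Summing over all pairs, the numerator becomes \<open>(\<Sum> \<lambda>\<^sub>i\<^sup>2) \<Sum> a\<^sub>i \<lambda>\<^sub>i / (z - \<gamma>\<^sub>i)\<close> with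
  \<open>a\<^sub>i = \<lambda>\<^sub>i (\<gamma>\<^sub>i - c)\<close>, where \<open>c = \<Sum> \<lambda>\<^sub>j\<^sup>2 \<gamma>\<^sub>j / \<Sum> \<lambda>\<^sub>j\<^sup>2\<close> is the \<open>\<lambda>\<^sup>2\<close>-weighted
  barycentre of the poles. Uniqueness holds because partial fractions with distinct poles are
  linearly independent: clearing denominators gives a polynomial whose value at \<open>\<gamma>\<^sub>m\<close> is the
  \<open>m\<close>-th coefficient times a nonzero product, so a vanishing combination has only finitely many zeros
  unless all coefficients vanish, while the representation holds for all but finitely many \<open>z\<close>.
\<close>

lemma prod_mult_sum_partial_fractions:
  fixes g :: "'i \<Rightarrow> 'a::field"
  assumes "finite A" "z \<notin> g ` A"
  shows "(\<Prod>k\<in>A. z - g k) * (\<Sum>i\<in>A. c i / (z - g i))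
         = (\<Sum>i\<in>A. c i * (\<Prod>k\<in>A - {i}. z - g k))"
  unfolding sum_distrib_left
proof (rule sum.cong[OF refl])
  fix i assume "i \<in> A"
  then have "(\<Prod>k\<in>A. z - g k) = (z - g i) * (\<Prod>k\<in>A - {i}. z - g k)" and "z - g i \<noteq> 0"
    using assms prod.remove by auto
  then show "(\<Prod>k\<in>A. z - g k) * (c i / (z - g i)) = c i * (\<Prod>k\<in>A - {i}. z - g k)"
    by simp
qed

lemma finite_zeros_partial_fractions:
  fixes g :: "'i \<Rightarrow> 'a::field"
  assumes "finite A" "inj_on g A" "m \<in> A" "c m \<noteq> 0"
  shows "finite {z. z \<notin> g ` A \<and> (\<Sum>i\<in>A. c i / (z - g i)) = 0}"
proof -
  define p where "p = (\<Sum>i\<in>A. smult (c i) (\<Prod>k\<in>A - {i}. [:- g k, 1:]))"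
  have poly_p: "poly p z = (\<Sum>i\<in>A. c i * (\<Prod>k\<in>A - {i}. z - g k))" for z
    by (simp add: p_def poly_sum poly_prod)
  have "poly p (g m) = (\<Sum>i\<in>A. if i = m then c m * (\<Prod>k\<in>A - {m}. g m - g k) else 0)"
    unfolding poly_p
  proof (rule sum.cong[OF refl])
    fix i assume "i \<in> A"
    show "c i * (\<Prod>k\<in>A - {i}. g m - g k) = (if i = m then c m * (\<Prod>k\<in>A - {m}. g m - g k) else 0)"
    proof (cases "i = m")
      case False
      with assms(1,3) have "(\<Prod>k\<in>A - {i}. g m - g k) = 0"
        by (intro prod_zero) auto
      with False show ?thesis by simp
    qed simp
  qed
  also have "\<dots> = c m * (\<Prod>k\<in>A - {m}. g m - g k)"
    using assms(1,3) by simp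
  also have "\<dots> \<noteq> 0"
    using assms(2-4) by (auto simp: prod_zero_iff[OF finite_Diff[OF assms(1)]] inj_on_def)
  finally have "p \<noteq> 0"
    by auto
  have "poly p z = 0" if "z \<notin> g ` A" "(\<Sum>i\<in>A. c i / (z - g i)) = 0" for z
    using prod_mult_sum_partial_fractions[OF assms(1) that(1), of c] that(2) by (simp add: poly_p)
  then have "{z. z \<notin> g ` A \<and> (\<Sum>i\<in>A. c i / (z - g i)) = 0} \<subseteq> {z. poly p z = 0}"
    by blast
  then show ?thesis
    using poly_roots_finite[OF \<open>p \<noteq> 0\<close>] by (rule finite_subset)
qed

lemma partial_fraction_coeffs_eq:
  fixes g :: "'i \<Rightarrow> 'a::field"
  assumes "finite A" "inj_on g A" "infinite S"
    and "\<And>z. z \<in> S \<Longrightarrow> z \<notin> g ` A \<and> (\<Sum>i\<in>A. c i / (z - g i)) = (\<Sum>i\<in>A. d i / (z - g i))"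
    and "m \<in> A"
  shows "c m = d m"
proof (rule ccontr)
  assume "c m \<noteq> d m"
  then have "finite {z. z \<notin> g ` A \<and> (\<Sum>i\<in>A. (c i - d i) / (z - g i)) = 0}"
    using assms by (intro finite_zeros_partial_fractions) auto
  moreover have "S \<subseteq> {z. z \<notin> g ` A \<and> (\<Sum>i\<in>A. (c i - d i) / (z - g i)) = 0}"
    using assms(4) by (auto simp: diff_divide_distrib sum_subtractf)
  ultimately show False
    using assms(3) finite_subset by blast
qed

lemma infinite_nonzeros_partial_fractions:
  fixes g :: "'i \<Rightarrow> 'a::field"
  assumes "infinite (UNIV :: 'a set)" "finite A" "inj_on g A" "m \<in> A" "c m \<noteq> 0"
  shows "infinite {z. z \<notin> g ` A \<and> (\<Sum>i\<in>A. c i / (z - g i)) \<noteq> 0}"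
proof
  assume "finite {z. z \<notin> g ` A \<and> (\<Sum>i\<in>A. c i / (z - g i)) \<noteq> 0}"
  moreover have "finite (g ` A \<union> {z. z \<notin> g ` A \<and> (\<Sum>i\<in>A. c i / (z - g i)) = 0})"
    using finite_zeros_partial_fractions[of A g m c] assms by simp
  ultimately have "finite ({z. z \<notin> g ` A \<and> (\<Sum>i\<in>A. c i / (z - g i)) \<noteq> 0}
                    \<union> (g ` A \<union> {z. z \<notin> g ` A \<and> (\<Sum>i\<in>A. c i / (z - g i)) = 0}))"
    by (rule finite_UnI)
  also have "\<dots> = UNIV"
    by blast
  finally show False
    using assms(1) by contradiction
qed

lemma sum_upper_pairs:
  fixes f :: "nat \<Rightarrow> nat \<Rightarrow> 'a::ab_group_add"
  shows "(\<Sum>i=0..n. \<Sum>j=i+1..n. f i j + f j i) = (\<Sum>i=0..n. \<Sum>j=0..n. f i j) - (\<Sum>i=0..n. f i i)"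
proof (induction n)
  case 0
  then show ?case by simp
next
  case (Suc n)
  have "(\<Sum>i=0..Suc n. \<Sum>j=i+1..Suc n. f i j + f j i) = (\<Sum>i=0..n. \<Sum>j=i+1..Suc n. f i j + f j i)"
    by simp
  also have "\<dots> = (\<Sum>i=0..n. (\<Sum>j=i+1..n. f i j + f j i) + (f i (Suc n) + f (Suc n) i))"
    by (intro sum.cong refl) simp
  also have "\<dots> = (\<Sum>i=0..n. \<Sum>j=0..n. f i j) - (\<Sum>i=0..n. f i i)
                  + (\<Sum>i=0..n. f i (Suc n)) + (\<Sum>i=0..n. f (Suc n) i)"
    by (subst sum.distrib, subst Suc.IH) (simp add: sum.distrib)
  also have "\<dots> = (\<Sum>i=0..Suc n. \<Sum>j=0..Suc n. f i j) - (\<Sum>i=0..Suc n. f i i)"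
    by (simp add: sum.distrib algebra_simps)
  finally show ?case .
qed

lemma prod_mult_pair_partial_fractions:
  fixes g :: "'i \<Rightarrow> 'a::field"
  assumes "finite A" "z \<notin> g ` A" "i \<in> A" "j \<in> A" "i \<noteq> j"
  shows "(g i - g j)\<^sup>2 * (\<Prod>k\<in>A - {i, j}. z - g k)
         = (\<Prod>k\<in>A. z - g k) * ((g i - g j) / (z - g i) + (g j - g i) / (z - g j))"
proof -
  have "z - g i \<noteq> 0" "z - g j \<noteq> 0"
    using assms by auto
  then have "(g i - g j) / (z - g i) + (g j - g i) / (z - g j)
             = (g i - g j)\<^sup>2 / ((z - g i) * (z - g j))"
    by (simp add: field_simps power2_eq_square)
  moreover have "(\<Prod>k\<in>A. z - g k) = (\<Prod>k\<in>A - {i, j}. z - g k) * ((z - g i) * (z - g j))"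
    using prod.subset_diff[of "{i, j}" A] assms by simp
  ultimately show ?thesis
    using \<open>z - g i \<noteq> 0\<close> \<open>z - g j \<noteq> 0\<close> by simp
qed

lemma prod_mult_sum_pair_fractions:
  fixes g :: "nat \<Rightarrow> 'a::field" and w :: "nat \<Rightarrow> nat \<Rightarrow> 'a"
  assumes "z \<notin> g ` {0..n}" and "\<And>i j. w i j = w j i"
  shows "(\<Sum>i=0..n. \<Sum>j=i+1..n. w i j * (g i - g j)\<^sup>2 * (\<Prod>k\<in>{0..n} - {i, j}. z - g k))
         = (\<Prod>k\<in>{0..n}. z - g k) * (\<Sum>i=0..n. \<Sum>j=0..n. w i j * (g i - g j) / (z - g i))"
proof -
  define f where "f i j = w i j * (g i - g j) / (z - g i)" for i j
  have "(\<Sum>i=0..n. \<Sum>j=i+1..n. w i j * (g i - g j)\<^sup>2 * (\<Prod>k\<in>{0..n} - {i, j}. z - g k))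
      = (\<Prod>k\<in>{0..n}. z - g k) * (\<Sum>i=0..n. \<Sum>j=i+1..n. f i j + f j i)"
    unfolding sum_distrib_left
  proof (intro sum.cong refl)
    fix i j assume "i \<in> {0..n}" "j \<in> {i + 1..n}"
    then show "w i j * (g i - g j)\<^sup>2 * (\<Prod>k\<in>{0..n} - {i, j}. z - g k)
             = (\<Prod>k\<in>{0..n}. z - g k) * (f i j + f j i)"
      using prod_mult_pair_partial_fractions[of "{0..n}" z g i j] assms
      by (simp add: f_def add_divide_distrib[symmetric] algebra_simps)
  qed
  also have "(\<Sum>i=0..n. \<Sum>j=i+1..n. f i j + f j i) = (\<Sum>i=0..n. \<Sum>j=0..n. f i j)"
    unfolding sum_upper_pairs by (simp add: f_def)
  finally show ?thesis
    by (simp add: f_def)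
qed

definition jnr_coeffs :: "nat \<Rightarrow> (nat \<Rightarrow> real) \<Rightarrow> (nat \<Rightarrow> complex) \<Rightarrow> nat \<Rightarrow> complex" where
  "jnr_coeffs N lam gam =
     (\<lambda>i\<in>{0..N}. complex_of_real (lam i) *
        (gam i - (\<Sum>j=0..N. complex_of_real ((lam j)\<^sup>2) * gam j) / complex_of_real (\<Sum>j=0..N. (lam j)\<^sup>2)))"

lemma jnr_R_eq_partial_fractions:
  assumes "(\<Sum>i=0..N. (lam i)\<^sup>2) \<noteq> 0" and "z \<notin> gam ` {0..N}"
  shows "jnr_R N lam gam z =
           (\<Sum>i=0..N. jnr_coeffs N lam gam i * complex_of_real (lam i) / (z - gam i))
           / (\<Sum>i=0..N. complex_of_real ((lam i)\<^sup>2) / (z - gam i))"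
proof -
  define L where "L = complex_of_real (\<Sum>i=0..N. (lam i)\<^sup>2)"
  define M where "M = (\<Sum>j=0..N. complex_of_real ((lam j)\<^sup>2) * gam j)"
  define P where "P = (\<Prod>k\<in>{0..N}. z - gam k)"
  define D where "D = (\<Sum>i=0..N. complex_of_real ((lam i)\<^sup>2) / (z - gam i))"
  define S where "S = (\<Sum>i=0..N. jnr_coeffs N lam gam i * complex_of_real (lam i) / (z - gam i))"
  have "L \<noteq> 0"
    using assms(1) unfolding L_def of_real_eq_0_iff .
  have "P \<noteq> 0"
    using assms(2) by (auto simp: P_def prod_zero_iff)
  have "(\<Sum>i=0..N. \<Sum>j=i+1..N. complex_of_real ((lam i)\<^sup>2 * (lam j)\<^sup>2) * (gam i - gam j)\<^sup>2
                              * (\<Prod>k\<in>{0..N} - {i, j}. z - gam k))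
        = P * (\<Sum>i=0..N. \<Sum>j=0..N. complex_of_real ((lam i)\<^sup>2 * (lam j)\<^sup>2) * (gam i - gam j) / (z - gam i))"
    unfolding P_def by (rule prod_mult_sum_pair_fractions) (use assms in auto)
  also have "(\<Sum>i=0..N. \<Sum>j=0..N. complex_of_real ((lam i)\<^sup>2 * (lam j)\<^sup>2) * (gam i - gam j) / (z - gam i))
        = (\<Sum>i=0..N. complex_of_real ((lam i)\<^sup>2) / (z - gam i) * (L * gam i - M))"
  proof (rule sum.cong[OF refl])
    fix i
    have "L * gam i - M = (\<Sum>j=0..N. complex_of_real ((lam j)\<^sup>2) * (gam i - gam j))"
      by (simp add: L_def M_def sum_distrib_right sum_subtractf right_diff_distrib)
    then show "(\<Sum>j=0..N. complex_of_real ((lam i)\<^sup>2 * (lam j)\<^sup>2) * (gam i - gam j) / (z - gam i))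
             = complex_of_real ((lam i)\<^sup>2) / (z - gam i) * (L * gam i - M)"
      by (simp add: sum_distrib_left mult_ac)
  qed
  also have "\<dots> = L * S"
    unfolding S_def sum_distrib_left
  proof (rule sum.cong[OF refl])
    fix i assume "i \<in> {0..N}"
    have "L * (gam i - M / L) = L * gam i - M"
      using \<open>L \<noteq> 0\<close> by (simp add: right_diff_distrib)
    with \<open>i \<in> {0..N}\<close> show "complex_of_real ((lam i)\<^sup>2) / (z - gam i) * (L * gam i - M)
        = L * (jnr_coeffs N lam gam i * complex_of_real (lam i) / (z - gam i))"
      by (simp add: jnr_coeffs_def L_def M_def power2_eq_square mult_ac)
  qed
  finally have numerator:
    "(\<Sum>i=0..N. \<Sum>j=i+1..N. complex_of_real ((lam i)\<^sup>2 * (lam j)\<^sup>2) * (gam i - gam j)\<^sup>2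
                            * (\<Prod>k\<in>{0..N} - {i, j}. z - gam k)) = P * (L * S)" .
  have denominator:
    "(\<Sum>j=0..N. complex_of_real ((lam j)\<^sup>2) * (\<Prod>k\<in>{0..N} - {j}. z - gam k)) = P * D"
    unfolding P_def D_def using assms(2) by (simp add: prod_mult_sum_partial_fractions)
  show ?thesis
    unfolding jnr_R_def numerator denominator L_def[symmetric] D_def[symmetric] S_def[symmetric]
    using \<open>L \<noteq> 0\<close> \<open>P \<noteq> 0\<close> by simp
qed

lemma jnr_coeffs_in_PiE: "jnr_coeffs N lam gam \<in> {0..N} \<rightarrow>\<^sub>E UNIV"
  by (simp add: jnr_coeffs_def)

lemma jnr_coeffs_unique:
  assumes "\<And>i. i \<le> N \<Longrightarrow> lam i > 0" and "inj_on gam {0..N}"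
    and "b \<in> {0..N} \<rightarrow>\<^sub>E UNIV"
    and "\<And>z. z \<notin> gam ` {0..N} \<Longrightarrow> (\<Sum>i=0..N. complex_of_real ((lam i)\<^sup>2) / (z - gam i)) \<noteq> 0 \<Longrightarrow>
           jnr_R N lam gam z = (\<Sum>i=0..N. b i * complex_of_real (lam i) / (z - gam i))
                               / (\<Sum>i=0..N. complex_of_real ((lam i)\<^sup>2) / (z - gam i))"
  shows "b = jnr_coeffs N lam gam"
proof (rule PiE_ext[OF assms(3) jnr_coeffs_in_PiE])
  fix i assume "i \<in> {0..N}"
  have "(\<Sum>i=0..N. (lam i)\<^sup>2) \<noteq> 0"
    using assms(1)[of 0] by (subst sum_nonneg_eq_0_iff) (auto intro!: bexI[of _ 0])
  have "b i * complex_of_real (lam i) = jnr_coeffs N lam gam i * complex_of_real (lam i)"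
  proof (rule partial_fraction_coeffs_eq[OF _ assms(2) _ _ \<open>i \<in> {0..N}\<close>])
    show "infinite {z. z \<notin> gam ` {0..N} \<and> (\<Sum>i=0..N. complex_of_real ((lam i)\<^sup>2) / (z - gam i)) \<noteq> 0}"
      using assms(1)[of 0] by (intro infinite_nonzeros_partial_fractions[OF infinite_UNIV_char_0 _ assms(2), of 0]) auto
    fix z assume z: "z \<in> {z. z \<notin> gam ` {0..N} \<and> (\<Sum>i=0..N. complex_of_real ((lam i)\<^sup>2) / (z - gam i)) \<noteq> 0}"
    then have "(\<Sum>i=0..N. b i * complex_of_real (lam i) / (z - gam i))
                 / (\<Sum>i=0..N. complex_of_real ((lam i)\<^sup>2) / (z - gam i))
             = (\<Sum>i=0..N. jnr_coeffs N lam gam i * complex_of_real (lam i) / (z - gam i))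
                 / (\<Sum>i=0..N. complex_of_real ((lam i)\<^sup>2) / (z - gam i))"
      using assms(4)[of z] jnr_R_eq_partial_fractions[OF \<open>(\<Sum>i=0..N. (lam i)\<^sup>2) \<noteq> 0\<close>, of z] by simp
    with z show "z \<notin> gam ` {0..N} \<and> (\<Sum>i=0..N. b i * complex_of_real (lam i) / (z - gam i))
          = (\<Sum>i=0..N. jnr_coeffs N lam gam i * complex_of_real (lam i) / (z - gam i))"
      by simp
  qed simp
  moreover have "lam i \<noteq> 0"
    using assms(1) \<open>i \<in> {0..N}\<close> by fastforce
  ultimately show "b i = jnr_coeffs N lam gam i"
    by simp
qed

theorem mainTheorem6:
  fixes N :: nat and lam :: "nat \<Rightarrow> real" and gam :: "nat \<Rightarrow> complex"
  assumes "N \<ge> 1"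
    and "\<And>i. i \<le> N \<Longrightarrow> lam i > 0"
    and "inj_on gam {0..N}"
  shows "\<exists>!a. a \<in> {0..N} \<rightarrow>\<^sub>E (UNIV :: complex set) \<and>
           (\<forall>z. z \<notin> gam ` {0..N} \<and>
                 (\<Sum>i=0..N. complex_of_real ((lam i)\<^sup>2) / (z - gam i)) \<noteq> 0 \<longrightarrow>
              jnr_R N lam gam z =
                (\<Sum>i=0..N. a i * complex_of_real (lam i) / (z - gam i))
                / (\<Sum>i=0..N. complex_of_real ((lam i)\<^sup>2) / (z - gam i))
            \<and> (\<Sum>i=0..N. a i * complex_of_real (lam i) / (z - gam i))
                / (\<Sum>i=0..N. complex_of_real ((lam i)\<^sup>2) / (z - gam i))
              = hinner N (\<lambda>i. cnj (a i)) (jnr_q lam gam z)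
                / hinner N (jnr_q_inf lam) (jnr_q lam gam z))"
proof -
  have "(\<Sum>i=0..N. (lam i)\<^sup>2) \<noteq> 0"
    using assms(2)[of 0] by (subst sum_nonneg_eq_0_iff) (auto intro!: bexI[of _ 0])
  have hinner_eq: "(\<Sum>i=0..N. a i * complex_of_real (lam i) / (z - gam i))
                     / (\<Sum>i=0..N. complex_of_real ((lam i)\<^sup>2) / (z - gam i))
                   = hinner N (\<lambda>i. cnj (a i)) (jnr_q lam gam z)
                     / hinner N (jnr_q_inf lam) (jnr_q lam gam z)" for a z
    by (simp add: hinner_def jnr_q_def jnr_q_inf_def power2_eq_square)
  show ?thesis
    unfolding hinner_eq[symmetric]
    by (intro ex1I[of _ "jnr_coeffs N lam gam"])
       (auto intro: jnr_coeffs_unique[OF assms(2,3)]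
             simp: jnr_coeffs_in_PiE jnr_R_eq_partial_fractions[OF \<open>(\<Sum>i=0..N. (lam i)\<^sup>2) \<noteq> 0\<close>])
qed

end
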